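(* Let $\mathfrak q:\mathbb R^n\to\mathbb R$ be a non-degenerate quadratic form with rational coefficients, $\mathfrak Q_{\mathfrak q}=\{\bar x:\mathfrak q(\bar x)=1\}$, and let $\psi$ be an approximating function with $\lim_{x\to\infty}x\psi(x)=0$. Let $\bar x\in\mathfrak Q_{\mathfrak q}$ and let $\frac1q\bar p\in\mathbb Q^n$ satisfy $\|\bar x-\frac1q\bar p\|\le\frac{\psi(q)}{q}$. If $q$ is large enough, then $\frac1q\bar p\in\mathfrak Q_{\mathfrak q}$.
   Context: $\|\cdot\|$ is the max-norm. An approximating function is a decreasing $\psi:\mathbb R_+\to\mathbb R_+$ with $\psi(x)\to0$ as $x\to\infty$. Rational vectors are written $\frac1q\bar p$ with $q\in\mathbb N$, $\bar p\in\mathbb Z^n$, $\gcd(q,p_1,\dots,p_n)=1$. *)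

theory Defs
  imports "HOL-Analysis.Analysis"
begin

definition maxnorm :: "real^'n \<Rightarrow> real" where
  "maxnorm x = Max (range (\<lambda>i. \<bar>x $ i\<bar>))"

definition quadform :: "real^'n^'n \<Rightarrow> real^'n \<Rightarrow> real" where
  "quadform A x = x \<bullet> (A *v x)"

definition approximating_function :: "(real \<Rightarrow> real) \<Rightarrow> bool" where
  "approximating_function \<psi> \<longleftrightarrow>
     (\<forall>x y. 0 \<le> x \<longrightarrow> x \<le> y \<longrightarrow> \<psi> y \<le> \<psi> x) \<and>
     (\<forall>x\<ge>0. 0 \<le> \<psi> x) \<and> (\<psi> \<longlongrightarrow> 0) at_top"

definition rat_vec :: "int^'n \<Rightarrow> nat \<Rightarrow> real^'n" where
  "rat_vec p q = (\<chi> i. real_of_int (p $ i) / real q)"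

definition reduced :: "int^'n \<Rightarrow> nat \<Rightarrow> bool" where
  "reduced p q \<longleftrightarrow> 0 < q \<and> Gcd (insert (int q) (range (\<lambda>i. p $ i))) = 1"

end

theory Submission
  imports Defs
begin

text \<open>
  If \<open>d\<close> is a common denominator of the entries of \<open>A\<close>, then \<open>d q\<^sup>2 Q(p/q)\<close> is an integer, so
  \<open>Q(p/q) \<noteq> 1\<close> forces \<open>\<bar>Q(p/q) - 1\<bar> \<ge> 1/(d q\<^sup>2)\<close>. On the other hand \<open>Q\<close> is Lipschitz near \<open>x\<close>,
  so \<open>\<bar>Q(p/q) - Q(x)\<bar> \<le> K \<psi>(q)/q\<close>. Together they give \<open>1 \<le> d K q \<psi>(q)\<close>, which fails once
  \<open>q \<psi>(q)\<close> is small.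
\<close>

lemma common_denominator:
  assumes "finite S" "S \<subseteq> \<rat>"
  shows "\<exists>d::nat. 0 < d \<and> (\<forall>r\<in>S. real d * r \<in> \<int>)"
  using assms
proof (induction S rule: finite_induct)
  case empty
  show ?case by (intro exI[of _ 1]) auto
next
  case (insert r S)
  then obtain d :: nat where d: "0 < d" "\<forall>s\<in>S. real d * s \<in> \<int>" by auto
  from insert.prems obtain a b :: int where "0 < b" "r = of_int a / of_int b"
    by (auto elim!: Rats_cases')
  then have b: "0 < nat b" "r = of_int a / of_nat (nat b)" by auto
  have "real (d * nat b) * r = of_int (int d * a)" using b by simp
  moreover have "real (d * nat b) * s \<in> \<int>" if "s \<in> S" for s
  proof -
    have "real (d * nat b) * s = real (nat b) * (real d * s)" by simp
    then show ?thesis using d(2) that by (metis Ints_mult Ints_of_nat)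
  qed
  ultimately show ?case using d b by (intro exI[of _ "d * nat b"]) auto
qed

lemma matrix_common_denominator:
  fixes A :: "real^'n^'m"
  assumes "\<forall>i j. A$i$j \<in> \<rat>"
  shows "\<exists>d::nat. 0 < d \<and> (\<forall>i j. real d * A$i$j \<in> \<int>)"
proof -
  have "range (\<lambda>(i, j). A$i$j) \<subseteq> \<rat>" using assms by auto
  then obtain d :: nat where "0 < d" "\<forall>r\<in>range (\<lambda>(i, j). A$i$j). real d * r \<in> \<int>"
    using common_denominator[of "range (\<lambda>(i, j). A$i$j)"] by auto
  then show ?thesis by force
qed

lemma quadform_eq_sum: "quadform A v = (\<Sum>i\<in>UNIV. \<Sum>j\<in>UNIV. A$i$j * v$i * v$j)"
  by (simp add: quadform_def inner_vec_def matrix_vector_mult_def sum_distrib_left mult_ac)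

lemma abs_le_maxnorm: "\<bar>v $ i\<bar> \<le> maxnorm v"
  unfolding maxnorm_def by (rule Max_ge) auto

lemma abs_mult_diff_le:
  fixes a b a' b' e :: real
  assumes "\<bar>a' - a\<bar> \<le> e" "\<bar>b' - b\<bar> \<le> e" "e \<le> 1"
  shows "\<bar>a' * b' - a * b\<bar> \<le> e * (\<bar>a\<bar> + \<bar>b\<bar> + 1)"
proof -
  have "a' * b' - a * b = (a' - a) * (b + (b' - b)) + a * (b' - b)"
    by (simp add: algebra_simps)
  also have "\<bar>\<dots>\<bar> \<le> \<bar>a' - a\<bar> * (\<bar>b\<bar> + \<bar>b' - b\<bar>) + \<bar>a\<bar> * \<bar>b' - b\<bar>"
    unfolding abs_mult[symmetric]
    by (intro order_trans[OF abs_triangle_ineq] add_mono order_refl)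
       (simp add: abs_mult mult_left_mono abs_triangle_ineq)
  also have "\<dots> \<le> e * (\<bar>b\<bar> + 1) + \<bar>a\<bar> * e"
    using assms by (intro add_mono mult_mono) auto
  also have "\<dots> = e * (\<bar>a\<bar> + \<bar>b\<bar> + 1)"
    by (simp add: algebra_simps)
  finally show ?thesis .
qed

definition quadform_lipschitz_at :: "real^'n^'n \<Rightarrow> real^'n \<Rightarrow> real" where
  "quadform_lipschitz_at A x = (\<Sum>i\<in>UNIV. \<Sum>j\<in>UNIV. \<bar>A$i$j\<bar> * (\<bar>x$i\<bar> + \<bar>x$j\<bar> + 1))"

lemma quadform_diff_le:
  assumes "maxnorm (x - y) \<le> e" "e \<le> 1"
  shows "\<bar>quadform A y - quadform A x\<bar> \<le> quadform_lipschitz_at A x * e"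
proof -
  have coord: "\<bar>y$i - x$i\<bar> \<le> e" for i
    using abs_le_maxnorm[of "x - y" i] assms(1) by (simp add: abs_minus_commute)
  have "\<bar>quadform A y - quadform A x\<bar>
          = \<bar>\<Sum>i\<in>UNIV. \<Sum>j\<in>UNIV. A$i$j * (y$i * y$j - x$i * x$j)\<bar>"
    by (simp add: quadform_eq_sum sum_subtractf[symmetric] algebra_simps)
  also have "\<dots> \<le> (\<Sum>i\<in>UNIV. \<Sum>j\<in>UNIV. \<bar>A$i$j\<bar> * \<bar>y$i * y$j - x$i * x$j\<bar>)"
    by (rule order_trans[OF sum_abs]) (intro sum_mono order_trans[OF sum_abs], simp add: abs_mult)
  also have "\<dots> \<le> (\<Sum>i\<in>UNIV. \<Sum>j\<in>UNIV. \<bar>A$i$j\<bar> * (e * (\<bar>x$i\<bar> + \<bar>x$j\<bar> + 1)))"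
    using coord assms(2) by (intro sum_mono mult_left_mono abs_mult_diff_le) auto
  finally show ?thesis by (simp add: quadform_lipschitz_at_def sum_distrib_left mult_ac)
qed

lemma quadform_rat_vec_scaled_Ints:
  assumes "\<forall>i j. c * A$i$j \<in> \<int>" "0 < q"
  shows "c * (real q)\<^sup>2 * quadform A (rat_vec p q) \<in> \<int>"
proof -
  have "c * (real q)\<^sup>2 * quadform A (rat_vec p q)
          = (\<Sum>i\<in>UNIV. \<Sum>j\<in>UNIV. (c * A$i$j) * of_int (p$i) * of_int (p$j))"
    using assms(2)
    by (simp add: quadform_eq_sum sum_distrib_left rat_vec_def power2_eq_square mult_ac)
  also have "\<dots> \<in> \<int>"
    by (intro Ints_sum) (metis assms(1) Ints_mult Ints_of_int)
  finally show ?thesis .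
qed

lemma quadform_rat_vec_gap:
  assumes "\<forall>i j. real d * A$i$j \<in> \<int>" "0 < d" "0 < q" "quadform A (rat_vec p q) \<noteq> 1"
  shows "1 \<le> real d * (real q)\<^sup>2 * \<bar>quadform A (rat_vec p q) - 1\<bar>"
proof -
  let ?m = "real d * (real q)\<^sup>2"
  have "?m * (quadform A (rat_vec p q) - 1) \<in> \<int>"
    using quadform_rat_vec_scaled_Ints[OF assms(1,3)]
    by (simp add: right_diff_distrib)
  moreover have "?m * (quadform A (rat_vec p q) - 1) \<noteq> 0"
    using assms(2-4) by simp
  ultimately have "1 \<le> \<bar>?m * (quadform A (rat_vec p q) - 1)\<bar>"
    by (rule Ints_nonzero_abs_ge1)
  then show ?thesis by (simp add: abs_mult)
qed

lemma quadform_rat_vec_eq_if_close: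
  assumes "\<forall>i j. real d * A$i$j \<in> \<int>" "0 < d" "0 < q" "quadform A x = 1"
    and "maxnorm (x - rat_vec p q) \<le> e" "e \<le> 1"
    and "real d * (real q)\<^sup>2 * quadform_lipschitz_at A x * e < 1"
  shows "quadform A (rat_vec p q) = 1"
proof (rule ccontr)
  assume "quadform A (rat_vec p q) \<noteq> 1"
  then have "1 \<le> real d * (real q)\<^sup>2 * \<bar>quadform A (rat_vec p q) - quadform A x\<bar>"
    using quadform_rat_vec_gap[OF assms(1-3)] assms(4) by simp
  also have "\<dots> \<le> real d * (real q)\<^sup>2 * (quadform_lipschitz_at A x * e)"
    using quadform_diff_le[OF assms(5,6)] by (intro mult_left_mono) auto
  finally show False using assms(7) by (simp add: mult_ac)
qed

theorem lemma4p1: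
  fixes A :: "real^'n^'n" and \<psi> :: "real \<Rightarrow> real" and x :: "real^'n"
  assumes rat: "\<forall>i j. A $ i $ j \<in> \<rat>"
    and sym: "transpose A = A"
    and nondeg: "det A \<noteq> 0"
    and psi: "approximating_function \<psi>"
    and lim: "((\<lambda>t. t * \<psi> t) \<longlongrightarrow> 0) at_top"
    and xQ: "quadform A x = 1"
  shows "\<exists>Q0::nat. \<forall>(q::nat) (p::int^'n).
           Q0 \<le> q \<longrightarrow> reduced p q \<longrightarrow>
           maxnorm (x - rat_vec p q) \<le> \<psi> (real q) / real q \<longrightarrow>
           quadform A (rat_vec p q) = 1"
proof -
  obtain d :: nat where d: "0 < d" and dA: "\<forall>i j. real d * A$i$j \<in> \<int>"
    using matrix_common_denominator[OF rat] by blast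
  define K where "K = quadform_lipschitz_at A x"
  have "(\<psi> \<longlongrightarrow> 0) at_top"
    using psi by (simp add: approximating_function_def)
  then have "\<forall>\<^sub>F t in at_top. 1 \<le> t \<and> \<psi> t < 1 \<and> real d * K * (t * \<psi> t) < 1"
    by (intro eventually_conj eventually_ge_at_top order_tendstoD(2)[OF _ zero_less_one]
        tendsto_mult_right_zero lim)
  then obtain Q0 where Q0: "\<And>q. Q0 \<le> q \<Longrightarrow>
      1 \<le> real q \<and> \<psi> (real q) < 1 \<and> real d * K * (real q * \<psi> (real q)) < 1"
    using eventually_compose_filterlim[OF _ filterlim_real_sequentially]
    by (fastforce simp: eventually_sequentially)
  show ?thesis
  proof (intro exI[of _ Q0] allI impI)
    fix q p
    assume "Q0 \<le> q" "reduced p q" and close: "maxnorm (x - rat_vec p q) \<le> \<psi> (real q) / real q"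
    then have q: "1 \<le> real q" "\<psi> (real q) < 1" "real d * K * (real q * \<psi> (real q)) < 1"
      using Q0 by auto
    have "real d * (real q)\<^sup>2 * K * (\<psi> (real q) / real q) = real d * K * (real q * \<psi> (real q))"
      using q(1) by (simp add: power2_eq_square field_simps)
    then show "quadform A (rat_vec p q) = 1"
      using q by (intro quadform_rat_vec_eq_if_close[OF dA d _ xQ close]) (auto simp: K_def)
  qed
qed

end
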